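(* Let $n$ and $\rho$ be positive integers with $\rho<n$, let $q$ be a prime power with $q\geq n-1$, and let ${\cal C}$ be a linear $[n,n-\rho,\rho+1]_q$ MDS code over $\mathbb{F}_q$. Define the code over graphs $$\mathcal{C}_{{\cal G}_1}=\Big\{G=(V_n,L)\ \Big|\ {\boldsymbol c}_{N_m^{\mathrm{in}}}\in{\cal C}\ \text{for all } m\in[n-\rho],\ \text{and}\ {\boldsymbol c}_{N_\ell^{\mathrm{out}}}\in{\cal C}\ \text{for all } \ell\in[n]\Big\}.$$ Then $\mathcal{C}_{{\cal G}_1}$ is a linear code over graphs over $\mathbb{F}_q$ of dimension $k_{\cal G}=(n-\rho)^2$ (i.e., it contains $q^{(n-\rho)^2}$ graphs), and it is a $\rho$-node-erasure-correcting code.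
   Context: For an integer $n>0$, $[n]=\{0,1,\ldots,n-1\}$. $V_n=\{v_0,\ldots,v_{n-1}\}$. A graph $G=(V_n,L)$ over $\mathbb{F}_q$ is a complete directed graph with self loops, i.e., edge set $V_n\times V_n$, together with a labeling $L:V_n\times V_n\to\mathbb{F}_q$. A code over graphs is a set of such graphs; it is linear if it is closed under $\mathbb{F}_q$-linear combinations of labelings, and its dimension is $\log_q$ of its size. For $i\in[n]$, $N_i^{\mathrm{out}}=\{(v_i,v_j)\mid j\in[n]\}$ and $N_i^{\mathrm{in}}=\{(v_j,v_i)\mid j\in[n]\}$. For a set of edges $U$, ${\boldsymbol c}_U\in\mathbb{F}_q^{|U|}$ is the vector of labels of the edges in $U$ listed in lexicographic order of the edges. A failure of node $i$ is the erasure of the labels of all edges in $N_i^{\mathrm{out}}\cup N_i^{\mathrm{in}}$ (the failed node indices are known). A code over graphs is $\rho$-node-erasure-correcting if for every graph in the code and every set of $\rho$ failed nodes, the erased labels are uniquely determined by the remaining labels (given the code). *)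

theory Defs
  imports Main
begin

text \<open>Vectors of length n over a field are functions nat => 'a vanishing outside [n] = {0..<n}.\<close>

definition vecs :: "nat \<Rightarrow> (nat \<Rightarrow> 'a::field) set" where
  "vecs n = {v. \<forall>i\<ge>n. v i = 0}"

definition linear_code :: "nat \<Rightarrow> (nat \<Rightarrow> 'a::field) set \<Rightarrow> bool" where
  "linear_code n C \<longleftrightarrow> C \<subseteq> vecs n \<and> (\<lambda>_. 0) \<in> C \<and>
     (\<forall>u\<in>C. \<forall>v\<in>C. (\<lambda>i. u i + v i) \<in> C) \<and>
     (\<forall>a. \<forall>u\<in>C. (\<lambda>i. a * u i) \<in> C)"

definition hamming_dist :: "nat \<Rightarrow> (nat \<Rightarrow> 'a) \<Rightarrow> (nat \<Rightarrow> 'a) \<Rightarrow> nat" where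
  "hamming_dist n u v = card {i. i < n \<and> u i \<noteq> v i}"

definition min_distance :: "nat \<Rightarrow> (nat \<Rightarrow> 'a) set \<Rightarrow> nat" where
  "min_distance n C = Min {hamming_dist n u v | u v. u \<in> C \<and> v \<in> C \<and> u \<noteq> v}"

definition lin_code_params :: "nat \<Rightarrow> nat \<Rightarrow> nat \<Rightarrow> (nat \<Rightarrow> 'a::{field,finite}) set \<Rightarrow> bool" where
  "lin_code_params n k d C \<longleftrightarrow> linear_code n C \<and> card C = card (UNIV :: 'a set) ^ k \<and> min_distance n C = d"

definition mds_code :: "nat \<Rightarrow> nat \<Rightarrow> nat \<Rightarrow> (nat \<Rightarrow> 'a::{field,finite}) set \<Rightarrow> bool" where
  "mds_code n k d C \<longleftrightarrow> lin_code_params n k d C \<and> d = n - k + 1"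

text \<open>A graph G = (V_n, L) is represented by its labeling L, L i j = label of edge (v_i, v_j);
  labels are 0 outside [n] x [n].\<close>
definition graphs :: "nat \<Rightarrow> (nat \<Rightarrow> nat \<Rightarrow> 'a::field) set" where
  "graphs n = {L. \<forall>i j. \<not> (i < n \<and> j < n) \<longrightarrow> L i j = 0}"

text \<open>c_{N_i^in}: labels of edges (v_j, v_i), j in [n], in lexicographic order (i.e. by j).\<close>
definition in_vec :: "(nat \<Rightarrow> nat \<Rightarrow> 'a) \<Rightarrow> nat \<Rightarrow> nat \<Rightarrow> 'a" where
  "in_vec L i = (\<lambda>j. L j i)"

text \<open>c_{N_i^out}: labels of edges (v_i, v_j), j in [n].\<close>
definition out_vec :: "(nat \<Rightarrow> nat \<Rightarrow> 'a) \<Rightarrow> nat \<Rightarrow> nat \<Rightarrow> 'a" where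
  "out_vec L i = (\<lambda>j. L i j)"

definition linear_graph_code :: "nat \<Rightarrow> (nat \<Rightarrow> nat \<Rightarrow> 'a::field) set \<Rightarrow> bool" where
  "linear_graph_code n CG \<longleftrightarrow> CG \<subseteq> graphs n \<and> (\<lambda>_ _. 0) \<in> CG \<and>
     (\<forall>L1\<in>CG. \<forall>L2\<in>CG. (\<lambda>i j. L1 i j + L2 i j) \<in> CG) \<and>
     (\<forall>a. \<forall>L\<in>CG. (\<lambda>i j. a * L i j) \<in> CG)"

text \<open>rho-node-erasure-correcting: for every set S of rho failed nodes, two codewords agreeing on
  all edges not incident to a failed node coincide (erased labels uniquely determined).\<close>
definition node_erasure_correcting :: "nat \<Rightarrow> nat \<Rightarrow> (nat \<Rightarrow> nat \<Rightarrow> 'a) set \<Rightarrow> bool" where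
  "node_erasure_correcting n \<rho> CG \<longleftrightarrow>
     (\<forall>S. S \<subseteq> {..<n} \<and> card S = \<rho> \<longrightarrow>
        (\<forall>L1\<in>CG. \<forall>L2\<in>CG.
           (\<forall>i<n. \<forall>j<n. i \<notin> S \<and> j \<notin> S \<longrightarrow> L1 i j = L2 i j) \<longrightarrow> L1 = L2))"

definition code_G1 :: "nat \<Rightarrow> nat \<Rightarrow> (nat \<Rightarrow> 'a::field) set \<Rightarrow> (nat \<Rightarrow> nat \<Rightarrow> 'a) set" where
  "code_G1 n \<rho> C = {L \<in> graphs n. (\<forall>m < n - \<rho>. in_vec L m \<in> C) \<and> (\<forall>l < n. out_vec L l \<in> C)}"

end

theory Submission
  imports Defs "HOL-Library.FuncSet"
begin

text \<open>The columns \<open>m < n - \<rho>\<close> and all rows of a graph in the code are codewords of an MDS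
  code, hence determined by any \<open>n - \<rho>\<close> of their entries. So a graph is determined by its
  top-left \<open>(n - \<rho>) \<times> (n - \<rho>)\<close> block, and every block extends, which gives the dimension.
  After \<open>\<rho>\<close> node failures the rows of the surviving nodes are recovered from their surviving
  entries, then the first \<open>n - \<rho>\<close> columns from the recovered rows, and these contain the block.\<close>

lemma codewords_eq_if_agree:
  fixes C :: "(nat \<Rightarrow> 'a) set"
  assumes "min_distance n C = d" and "u \<in> C" and "v \<in> C"
    and "K \<subseteq> {..<n}" and "n < card K + d" and "\<forall>i\<in>K. u i = v i"
  shows "u = v"
proof (rule ccontr)
  assume "u \<noteq> v"
  let ?D = "{hamming_dist n u v | u v. u \<in> C \<and> v \<in> C \<and> u \<noteq> v}"
  have "?D \<subseteq> {..n}"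
    by (auto simp: hamming_dist_def intro!: order.trans[OF card_mono card_lessThan[THEN eq_imp_le]])
  then have "Min ?D \<le> hamming_dist n u v"
    using assms(2,3) \<open>u \<noteq> v\<close> by (intro Min_le) (auto intro: finite_subset)
  then have "d \<le> hamming_dist n u v"
    using assms(1) unfolding min_distance_def by simp
  also have "\<dots> \<le> card ({..<n} - K)"
    unfolding hamming_dist_def by (rule card_mono) (use assms(6) in auto)
  also have "\<dots> = n - card K"
    using assms(4) by (simp add: card_Diff_subset finite_subset)
  moreover have "card K \<le> n"
    using card_mono[OF _ assms(4)] by simp
  ultimately show False using assms(5) by linarith
qed

text \<open>Injectivity comes from the minimum distance, surjectivity from counting.\<close>
lemma mds_bij_betw_restrict_prefix:
  fixes C :: "(nat \<Rightarrow> 'a::finite) set"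
  assumes "min_distance n C = n - k + 1" and "card C = card (UNIV :: 'a set) ^ k" and "k \<le> n"
  shows "bij_betw (\<lambda>c. restrict c {..<k}) C (PiE {..<k} (\<lambda>_. UNIV))"
proof -
  have inj: "inj_on (\<lambda>c. restrict c {..<k}) C"
  proof (rule inj_onI)
    fix u v assume "u \<in> C" "v \<in> C" "restrict u {..<k} = restrict v {..<k}"
    then show "u = v"
      using assms(1,3) by (intro codewords_eq_if_agree[of n C _ u v "{..<k}"])
        (auto simp: fun_eq_iff restrict_def split: if_splits)
  qed
  have "card ((\<lambda>c. restrict c {..<k}) ` C) = card (PiE {..<k} (\<lambda>_. UNIV :: 'a set))"
    using card_image[OF inj] assms(2) by (simp add: card_PiE)
  moreover have "(\<lambda>c. restrict c {..<k}) ` C \<subseteq> PiE {..<k} (\<lambda>_. UNIV)"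
    by (simp add: image_subset_iff)
  ultimately have "(\<lambda>c. restrict c {..<k}) ` C = PiE {..<k} (\<lambda>_. UNIV)"
    by (intro card_subset_eq) (auto simp: finite_PiE)
  with inj show ?thesis by (simp add: bij_betw_def)
qed

lemma mds_extends_prefix:
  fixes C :: "(nat \<Rightarrow> 'a::finite) set"
  assumes "min_distance n C = n - k + 1" and "card C = card (UNIV :: 'a set) ^ k" and "k \<le> n"
  shows "\<exists>c\<in>C. \<forall>i<k. c i = w i"
proof -
  have "restrict w {..<k} \<in> (\<lambda>c. restrict c {..<k}) ` C"
    using mds_bij_betw_restrict_prefix[OF assms] by (simp add: bij_betw_def)
  then obtain c where "c \<in> C" and "restrict w {..<k} = restrict c {..<k}" by blast
  then show ?thesis by (metis lessThan_iff restrict_apply')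
qed

lemma linear_graph_code_G1:
  assumes "linear_code n C"
  shows "linear_graph_code n (code_G1 n \<rho> C)"
  using assms unfolding linear_graph_code_def linear_code_def code_G1_def graphs_def
    in_vec_def out_vec_def
  by auto

lemma code_G1_eq_if_agree_on_block:
  assumes "min_distance n C = \<rho> + 1" and "L1 \<in> code_G1 n \<rho> C" and "L2 \<in> code_G1 n \<rho> C"
    and "\<And>i j. i < n - \<rho> \<Longrightarrow> j < n - \<rho> \<Longrightarrow> L1 i j = L2 i j"
  shows "L1 = L2"
proof
  fix l
  have columns: "L1 i m = L2 i m" if "m < n - \<rho>" for i m
  proof -
    have "in_vec L1 m = in_vec L2 m"
      using assms that by (intro codewords_eq_if_agree[of n C "\<rho> + 1" _ _ "{..<n - \<rho>}"])
        (auto simp: code_G1_def in_vec_def)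
    then show ?thesis by (simp add: in_vec_def fun_eq_iff)
  qed
  show "L1 l = L2 l"
  proof (cases "l < n")
    case True
    then have "out_vec L1 l = out_vec L2 l"
      using assms(1-3) columns by (intro codewords_eq_if_agree[of n C "\<rho> + 1" _ _ "{..<n - \<rho>}"])
        (auto simp: code_G1_def out_vec_def)
    then show ?thesis by (simp add: out_vec_def)
  next
    case False
    with assms(2,3) show ?thesis by (auto simp: code_G1_def graphs_def)
  qed
qed

text \<open>Extend the columns of the block to codewords, then each row of the resulting
  \<open>n \<times> (n - \<rho>)\<close> array; the first \<open>n - \<rho>\<close> columns of the final graph are then exactly the
  chosen column codewords.\<close>
lemma code_G1_extends_block:
  fixes C :: "(nat \<Rightarrow> 'a::{field,finite}) set"
  assumes "min_distance n C = \<rho> + 1" and "card C = card (UNIV :: 'a set) ^ (n - \<rho>)"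
    and "\<rho> \<le> n" and "C \<subseteq> vecs n"
  obtains L where "L \<in> code_G1 n \<rho> C" and "\<And>i j. i < n - \<rho> \<Longrightarrow> j < n - \<rho> \<Longrightarrow> L i j = f i j"
proof -
  have "min_distance n C = n - (n - \<rho>) + 1" using assms(1,3) by simp
  note extend = mds_extends_prefix[OF this assms(2) diff_le_self]
  have zero: "c i = 0" if "c \<in> C" and "n \<le> i" for c i
    using assms(4) that by (auto simp: vecs_def)
  have "\<forall>m. \<exists>c. c \<in> C \<and> (\<forall>i<n - \<rho>. c i = f i m)"
    using extend by (simp add: Bex_def)
  then obtain col where col: "\<forall>m. col m \<in> C \<and> (\<forall>i<n - \<rho>. col m i = f i m)"
    by (rule choice[THEN exE])
  have "\<forall>l. \<exists>c. c \<in> C \<and> (\<forall>j<n - \<rho>. c j = col j l)"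
    using extend by (simp add: Bex_def)
  then obtain row where row: "\<forall>l. row l \<in> C \<and> (\<forall>j<n - \<rho>. row l j = col j l)"
    by (rule choice[THEN exE])
  define L where "L l j = (if l < n then row l j else 0)" for l j
  have "L \<in> graphs n"
    unfolding graphs_def
  proof (intro CollectI allI impI)
    fix i j assume "\<not> (i < n \<and> j < n)"
    then show "L i j = 0"
      using zero[of "row i" j] row by (cases "i < n") (auto simp: L_def)
  qed
  moreover have "in_vec L m = col m" if "m < n - \<rho>" for m
  proof
    fix i show "in_vec L m i = col m i"
      using that zero[of "col m" i] row col by (cases "i < n") (auto simp: in_vec_def L_def)
  qed
  moreover have "out_vec L l = row l" if "l < n" for l
    using that by (simp add: out_vec_def L_def fun_eq_iff)
  ultimately have "L \<in> code_G1 n \<rho> C"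
    using col row by (simp add: code_G1_def)
  moreover have "L i j = f i j" if "i < n - \<rho>" and "j < n - \<rho>" for i j
    using that row col by (auto simp: L_def)
  ultimately show ?thesis by (rule that)
qed

lemma card_code_G1:
  fixes C :: "(nat \<Rightarrow> 'a::{field,finite}) set"
  assumes "min_distance n C = \<rho> + 1" and "card C = card (UNIV :: 'a set) ^ (n - \<rho>)"
    and "\<rho> \<le> n" and "C \<subseteq> vecs n"
  shows "card (code_G1 n \<rho> C) = card (UNIV :: 'a set) ^ ((n - \<rho>)\<^sup>2)"
proof -
  let ?B = "{..<n - \<rho>} \<times> {..<n - \<rho>}"
  let ?block = "\<lambda>L. restrict (case_prod L) ?B"
  have "bij_betw ?block (code_G1 n \<rho> C) (PiE ?B (\<lambda>_. UNIV :: 'a set))"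
  proof (rule bij_betw_imageI)
    show "inj_on ?block (code_G1 n \<rho> C)"
    proof (rule inj_onI)
      fix L1 L2 assume "L1 \<in> code_G1 n \<rho> C" "L2 \<in> code_G1 n \<rho> C" "?block L1 = ?block L2"
      then show "L1 = L2"
        using assms(1) by (intro code_G1_eq_if_agree_on_block[of n C \<rho>])
          (auto simp: fun_eq_iff restrict_def split: if_splits)
    qed
    show "?block ` code_G1 n \<rho> C = PiE ?B (\<lambda>_. UNIV)"
    proof
      show "?block ` code_G1 n \<rho> C \<subseteq> PiE ?B (\<lambda>_. UNIV)"
        by (simp add: image_subset_iff)
      show "PiE ?B (\<lambda>_. UNIV) \<subseteq> ?block ` code_G1 n \<rho> C"
      proof
        fix g :: "nat \<times> nat \<Rightarrow> 'a" assume g: "g \<in> PiE ?B (\<lambda>_. UNIV)"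
        obtain L where L: "L \<in> code_G1 n \<rho> C"
          and block: "\<And>i j. i < n - \<rho> \<Longrightarrow> j < n - \<rho> \<Longrightarrow> L i j = curry g i j"
          using code_G1_extends_block[OF assms] by blast
        have "?block L = g"
          using g block by (auto simp: fun_eq_iff PiE_def extensional_def)
        with L show "g \<in> ?block ` code_G1 n \<rho> C" by blast
      qed
    qed
  qed
  then have "card (code_G1 n \<rho> C) = card (PiE ?B (\<lambda>_. UNIV :: 'a set))"
    by (rule bij_betw_same_card)
  then show ?thesis by (simp add: card_PiE power2_eq_square)
qed

lemma node_erasure_correcting_code_G1:
  assumes "min_distance n C = \<rho> + 1"
  shows "node_erasure_correcting n \<rho> (code_G1 n \<rho> C)"
  unfolding node_erasure_correcting_def
proof (intro allI impI ballI)
  fix S L1 L2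
  assume S: "S \<subseteq> {..<n} \<and> card S = \<rho>" and L: "L1 \<in> code_G1 n \<rho> C" "L2 \<in> code_G1 n \<rho> C"
    and survivors: "\<forall>i<n. \<forall>j<n. i \<notin> S \<and> j \<notin> S \<longrightarrow> L1 i j = L2 i j"
  let ?T = "{..<n} - S"
  have "finite S" using S finite_subset by blast
  then have card_T: "card ?T = n - \<rho>"
    using S by (simp add: card_Diff_subset)
  have rows: "L1 l = L2 l" if "l < n" and "l \<notin> S" for l
  proof -
    have "out_vec L1 l = out_vec L2 l"
      using assms L that survivors card_T
      by (intro codewords_eq_if_agree[of n C "\<rho> + 1" _ _ ?T]) (auto simp: code_G1_def out_vec_def)
    then show ?thesis by (simp add: out_vec_def)
  qed
  have columns: "L1 i m = L2 i m" if "m < n - \<rho>" for i m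
  proof -
    have "in_vec L1 m = in_vec L2 m"
      using assms L that rows card_T
      by (intro codewords_eq_if_agree[of n C "\<rho> + 1" _ _ ?T]) (auto simp: code_G1_def in_vec_def)
    then show ?thesis by (simp add: in_vec_def fun_eq_iff)
  qed
  show "L1 = L2"
    using assms L columns by (rule code_G1_eq_if_agree_on_block)
qed

theorem theorem1:
  fixes n \<rho> :: nat and C :: "(nat \<Rightarrow> 'a::{field,finite}) set"
  assumes "0 < \<rho>" and "\<rho> < n" and "card (UNIV :: 'a set) \<ge> n - 1"
    and "mds_code n (n - \<rho>) (\<rho> + 1) C"
  shows "linear_graph_code n (code_G1 n \<rho> C)
       \<and> card (code_G1 n \<rho> C) = card (UNIV :: 'a set) ^ ((n - \<rho>)^2)
       \<and> node_erasure_correcting n \<rho> (code_G1 n \<rho> C)"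
proof -
  have lin: "linear_code n C" and card: "card C = card (UNIV :: 'a set) ^ (n - \<rho>)"
    and dist: "min_distance n C = \<rho> + 1"
    using assms(4) by (simp_all add: mds_code_def lin_code_params_def)
  have "C \<subseteq> vecs n" using lin by (simp add: linear_code_def)
  with assms(2) show ?thesis
    using linear_graph_code_G1[OF lin] card_code_G1[OF dist card] node_erasure_correcting_code_G1[OF dist]
    by simp
qed

end
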